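(* Let $\mathcal{X}$ be a covariate space, $\mathbb{P}^X$ a distribution on $\mathcal{X}$, $A\ge0$, $\sigma>0$, and $\mathcal{C}$ a class of functions $\mathcal{X}\to\mathbb{R}$. Under the model below, $$\mathfrak{M}_n^{\mathrm{EB}}(\mathcal{C};A,\sigma^2)\ \le\ \frac{\sigma^4}{(\sigma^2+A)^2}\,\mathfrak{M}_n^{\mathrm{Reg}}(\mathcal{C};A+\sigma^2).$$
   Context: Model: for a function $m:\mathcal{X}\to\mathbb{R}$, data are i.i.d. triples with $X_i\sim\mathbb{P}^X$, $\mu_i\mid X_i\sim N(m(X_i),A)$, $Z_i\mid \mu_i\sim N(\mu_i,\sigma^2)$; only $(X_i,Z_i)$, $i=1,\dots,n$, are observed, $\sigma^2$ known. The Bayes rule is $t^*_{m,A}(x,z)=\frac{A}{\sigma^2+A}z+\frac{\sigma^2}{\sigma^2+A}m(x)$. For a denoiser $t:\mathcal{X}\times\mathbb{R}\to\mathbb{R}$, $L(t;m,A)=\mathbb{E}_{m,A}[(t(X_{n+1},Z_{n+1})-\mu_{n+1})^2]-\mathbb{E}_{m,A}[(t^*_{m,A}(X_{n+1},Z_{n+1})-\mu_{n+1})^2]$ with $(X_{n+1},\mu_{n+1},Z_{n+1})$ a fresh independent draw. $\mathfrak{M}_n^{\mathrm{EB}}(\mathcal{C};A,\sigma^2)=\inf_{\hat t_n}\sup_{m\in\mathcal{C}}\mathbb{E}_{m,A}[L(\hat t_n;m,A)]$, infimum over denoisers measurable with respect to $(X_i,Z_i)_{1\le i\le n}$. $\mathfrak{M}_n^{\mathrm{Reg}}(\mathcal{C};A+\sigma^2)=\inf_{\hat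 m_n}\sup_{m\in\mathcal{C}}\mathbb{E}_{m,A}\big[\int(\hat m_n(x)-m(x))^2d\mathbb{P}^X(x)\big]$, infimum over estimators $\hat m_n$ measurable with respect to $(X_i,Z_i)_{1\le i\le n}$ (note $Z_i\mid X_i\sim N(m(X_i),A+\sigma^2)$). *)

theory Defs
  imports "HOL-Probability.Probability"
begin

definition gauss :: "real \<Rightarrow> real \<Rightarrow> real measure" where
  "gauss mu v = (if v = 0 then return borel mu else density lborel (normal_density mu (sqrt v)))"

definition eb_model :: "'x measure \<Rightarrow> ('x \<Rightarrow> real) \<Rightarrow> real \<Rightarrow> real \<Rightarrow> ('x \<times> real \<times> real) measure" where
  "eb_model PX m A s2 =
     PX \<bind> (\<lambda>x. gauss (m x) A \<bind> (\<lambda>mu. gauss mu s2 \<bind>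
        (\<lambda>z. return (PX \<Otimes>\<^sub>M (borel \<Otimes>\<^sub>M borel)) (x, mu, z))))"

definition obs_model :: "'x measure \<Rightarrow> ('x \<Rightarrow> real) \<Rightarrow> real \<Rightarrow> real \<Rightarrow> ('x \<times> real) measure" where
  "obs_model PX m A s2 = distr (eb_model PX m A s2) (PX \<Otimes>\<^sub>M borel) (\<lambda>(x, mu, z). (x, z))"

definition data_model :: "'x measure \<Rightarrow> nat \<Rightarrow> ('x \<Rightarrow> real) \<Rightarrow> real \<Rightarrow> real \<Rightarrow> (nat \<Rightarrow> 'x \<times> real) measure" where
  "data_model PX n m A s2 = (\<Pi>\<^sub>M i\<in>{..<n}. obs_model PX m A s2)"

definition data_space :: "'x measure \<Rightarrow> nat \<Rightarrow> (nat \<Rightarrow> 'x \<times> real) measure" where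
  "data_space PX n = (\<Pi>\<^sub>M i\<in>{..<n}. PX \<Otimes>\<^sub>M borel)"

definition bayes_rule :: "('x \<Rightarrow> real) \<Rightarrow> real \<Rightarrow> real \<Rightarrow> 'x \<Rightarrow> real \<Rightarrow> real" where
  "bayes_rule m A s2 x z = A / (s2 + A) * z + s2 / (s2 + A) * m x"

definition eb_loss :: "'x measure \<Rightarrow> ('x \<Rightarrow> real \<Rightarrow> real) \<Rightarrow> ('x \<Rightarrow> real) \<Rightarrow> real \<Rightarrow> real \<Rightarrow> ennreal" where
  "eb_loss PX t m A s2 =
     (\<integral>\<^sup>+ (x, mu, z). ennreal ((t x z - mu)\<^sup>2) \<partial>eb_model PX m A s2)
   - (\<integral>\<^sup>+ (x, mu, z). ennreal ((bayes_rule m A s2 x z - mu)\<^sup>2) \<partial>eb_model PX m A s2)"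

definition eb_minimax :: "'x measure \<Rightarrow> nat \<Rightarrow> ('x \<Rightarrow> real) set \<Rightarrow> real \<Rightarrow> real \<Rightarrow> ennreal" where
  "eb_minimax PX n C A s2 =
     (INF t \<in> {t :: (nat \<Rightarrow> 'x \<times> real) \<Rightarrow> 'x \<Rightarrow> real \<Rightarrow> real.
                 (\<lambda>(d, x, z). t d x z) \<in> borel_measurable (data_space PX n \<Otimes>\<^sub>M (PX \<Otimes>\<^sub>M borel))}.
        SUP m \<in> C. \<integral>\<^sup>+ d. eb_loss PX (t d) m A s2 \<partial>data_model PX n m A s2)"

text \<open>Regression minimax risk (data generated under E_{m,A}, so Z | X ~ N(m X, A + s2)).\<close>
definition reg_minimax :: "'x measure \<Rightarrow> nat \<Rightarrow> ('x \<Rightarrow> real) set \<Rightarrow> real \<Rightarrow> real \<Rightarrow> ennreal" where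
  "reg_minimax PX n C A s2 =
     (INF mh \<in> {mh :: (nat \<Rightarrow> 'x \<times> real) \<Rightarrow> 'x \<Rightarrow> real.
                 (\<lambda>(d, x). mh d x) \<in> borel_measurable (data_space PX n \<Otimes>\<^sub>M PX)}.
        SUP m \<in> C. \<integral>\<^sup>+ d. (\<integral>\<^sup>+ x. ennreal ((mh d x - m x)\<^sup>2) \<partial>PX) \<partial>data_model PX n m A s2)"

end

theory Submission
  imports Defs
begin

text \<open>Plugging a regression estimate \<open>mh\<close> into the Bayes rule gives the denoiser
  \<open>a z + b mh(x)\<close> with \<open>a = A/(\<sigma>\<^sup>2+A)\<close>, \<open>b = \<sigma>\<^sup>2/(\<sigma>\<^sup>2+A)\<close>. Because \<open>a + b = 1\<close>, its error
  splits into the noise term \<open>a\<^sup>2\<sigma>\<^sup>2\<close> and \<open>b\<^sup>2 (\<mu> - mh(x))\<^sup>2\<close>; averaging over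
  \<open>\<mu> ~ N(m(x), A)\<close> shows that its risk exceeds the Bayes risk by exactly
  \<open>b\<^sup>2 \<parallel>mh - m\<parallel>\<^sup>2\<close> in \<open>L\<^sup>2(P\<^sup>X)\<close>.\<close>

lemma sets_gauss [measurable_cong, simp]: "sets (gauss mu v) = sets borel"
  by (simp add: gauss_def)

lemma prob_space_gauss: "v \<ge> 0 \<Longrightarrow> prob_space (gauss mu v)"
  by (auto simp: gauss_def prob_space_return prob_space_normal_density)

lemma measurable_gauss:
  assumes "v \<ge> 0"
  shows "(\<lambda>mu. gauss mu v) \<in> borel \<rightarrow>\<^sub>M subprob_algebra borel"
proof (cases "v = 0")
  case True
  then show ?thesis by (simp add: gauss_def return_measurable)
next
  case False
  show ?thesis
  proof (rule measurable_subprob_algebra)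
    show "subprob_space (gauss mu v)" for mu
      using prob_space_gauss[OF assms] by (rule prob_space_imp_subprob_space)
  next
    fix S :: "real set" assume S: "S \<in> sets borel"
    have "(\<lambda>mu. emeasure (gauss mu v) S)
        = (\<lambda>mu. \<integral>\<^sup>+ x. ennreal (normal_density mu (sqrt v) x) * indicator S x \<partial>lborel)"
      using False S by (simp add: gauss_def emeasure_density)
    also have "\<dots> \<in> borel_measurable borel"
      using S unfolding normal_density_def by measurable
    finally show "(\<lambda>mu. emeasure (gauss mu v) S) \<in> borel_measurable borel" .
  qed simp
qed

lemma nn_integral_gauss_shifted_square:
  assumes "v \<ge> 0" and "c \<ge> 0"
  shows "(\<integral>\<^sup>+ z. ennreal (c + (p * z + q)\<^sup>2) \<partial>gauss mu v) = ennreal (c + p\<^sup>2 * v + (p * mu + q)\<^sup>2)"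
proof (cases "v = 0")
  case True
  then show ?thesis by (simp add: gauss_def nn_integral_return)
next
  case False
  define s where "s = sqrt v"
  have s: "s > 0" and v: "s\<^sup>2 = v" using assms False by (simp_all add: s_def)
  let ?N = "normal_density mu s"
  have "has_bochner_integral lborel
      (\<lambda>z. (c + (p * mu + q)\<^sup>2) * ?N z + 2 * p * (p * mu + q) * (?N z * (z - mu)) + p\<^sup>2 * (?N z * (z - mu) ^ 2))
      ((c + (p * mu + q)\<^sup>2) * 1 + 2 * p * (p * mu + q) * 0 + p\<^sup>2 * s\<^sup>2)"
    using normal_moment_even[OF s, of mu 1] normal_moment_odd[OF s, of mu 0]
      integrable_normal_density[OF s] integral_normal_density[OF s]
    by (intro has_bochner_integral_add has_bochner_integral_mult_right)
       (simp_all add: has_bochner_integral_iff power2_eq_square)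
  then have "has_bochner_integral lborel (\<lambda>z. ?N z * (c + (p * z + q)\<^sup>2)) (c + p\<^sup>2 * v + (p * mu + q)\<^sup>2)"
    by (rule has_bochner_integral_cong[THEN iffD1, rotated -1]) (auto simp: v[symmetric] power2_eq_square algebra_simps)
  moreover have "(\<integral>\<^sup>+ z. ennreal (c + (p * z + q)\<^sup>2) \<partial>gauss mu v)
      = (\<integral>\<^sup>+ z. ennreal (?N z * (c + (p * z + q)\<^sup>2)) \<partial>lborel)"
    using False assms(2) by (simp add: gauss_def s_def nn_integral_density ennreal_mult'')
  ultimately show ?thesis
    using assms s by (simp add: has_bochner_integral_iff nn_integral_eq_integral)
qed

lemma nn_integral_eb_model:
  fixes f :: "'x \<times> real \<times> real \<Rightarrow> ennreal"
  assumes f[measurable]: "f \<in> borel_measurable (PX \<Otimes>\<^sub>M (borel \<Otimes>\<^sub>M borel))"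
    and m[measurable]: "m \<in> borel_measurable PX" and "A \<ge> 0" and "s2 \<ge> 0"
  shows "(\<integral>\<^sup>+ y. f y \<partial>eb_model PX m A s2)
    = (\<integral>\<^sup>+ x. \<integral>\<^sup>+ mu. \<integral>\<^sup>+ z. f (x, mu, z) \<partial>gauss mu s2 \<partial>gauss (m x) A \<partial>PX)"
proof -
  define S where "S = PX \<Otimes>\<^sub>M (borel \<Otimes>\<^sub>M borel :: (real \<times> real) measure)"
  let ?K = "\<lambda>x. gauss (m x) A \<bind> (\<lambda>mu. gauss mu s2 \<bind> (\<lambda>z. return S (x, mu, z)))"
  have f_S: "f \<in> borel_measurable S"
    unfolding S_def by (rule f)
  have ret: "(\<lambda>p. return S (fst (fst p), snd (fst p), snd p)) \<in> (PX \<Otimes>\<^sub>M borel) \<Otimes>\<^sub>M borel \<rightarrow>\<^sub>M subprob_algebra S"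
    unfolding S_def by measurable
  have noise: "(\<lambda>(x, mu). gauss mu s2 \<bind> (\<lambda>z. return S (x, mu, z))) \<in> PX \<Otimes>\<^sub>M borel \<rightarrow>\<^sub>M subprob_algebra S"
    using measurable_bind'[OF measurable_compose[OF measurable_snd measurable_gauss[OF \<open>s2 \<ge> 0\<close>]],
        of "\<lambda>(x, mu) z. return S (x, mu, z)"] ret
    by (simp add: case_prod_beta')
  have prior: "?K \<in> PX \<rightarrow>\<^sub>M subprob_algebra S"
    using measurable_bind'[OF measurable_compose[OF m measurable_gauss[OF \<open>A \<ge> 0\<close>]],
        of "\<lambda>x mu. gauss mu s2 \<bind> (\<lambda>z. return S (x, mu, z))"] noise
    by (simp add: case_prod_beta')
  have "(\<integral>\<^sup>+ y. f y \<partial>eb_model PX m A s2) = (\<integral>\<^sup>+ x. \<integral>\<^sup>+ y. f y \<partial>?K x \<partial>PX)"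
    unfolding eb_model_def S_def[symmetric] by (rule nn_integral_bind[OF f_S prior])
  also have "\<dots> = (\<integral>\<^sup>+ x. \<integral>\<^sup>+ mu. \<integral>\<^sup>+ z. f (x, mu, z) \<partial>gauss mu s2 \<partial>gauss (m x) A \<partial>PX)"
  proof (intro nn_integral_cong)
    fix x assume x: "x \<in> space PX"
    have noise_x: "(\<lambda>mu. gauss mu s2 \<bind> (\<lambda>z. return S (x, mu, z))) \<in> gauss (m x) A \<rightarrow>\<^sub>M subprob_algebra S"
      using measurable_Pair2[OF noise x] by simp
    have ret_x: "(\<lambda>z. return S (x, mu, z)) \<in> gauss mu s2 \<rightarrow>\<^sub>M subprob_algebra S" for mu
      using x unfolding S_def by measurable
    have "(\<integral>\<^sup>+ y. f y \<partial>?K x)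
        = (\<integral>\<^sup>+ mu. \<integral>\<^sup>+ z. \<integral>\<^sup>+ y. f y \<partial>return S (x, mu, z) \<partial>gauss mu s2 \<partial>gauss (m x) A)"
      by (simp add: nn_integral_bind[OF f_S noise_x] nn_integral_bind[OF f_S ret_x])
    also have "\<dots> = (\<integral>\<^sup>+ mu. \<integral>\<^sup>+ z. f (x, mu, z) \<partial>gauss mu s2 \<partial>gauss (m x) A)"
      using x f_S by (simp add: nn_integral_return S_def space_pair_measure)
    finally show "(\<integral>\<^sup>+ y. f y \<partial>?K x) = (\<integral>\<^sup>+ mu. \<integral>\<^sup>+ z. f (x, mu, z) \<partial>gauss mu s2 \<partial>gauss (m x) A)" .
  qed
  finally show ?thesis .
qed

lemma eb_model_affine_risk:
  fixes m g :: "'x \<Rightarrow> real"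
  assumes "prob_space PX" and [measurable]: "m \<in> borel_measurable PX" "g \<in> borel_measurable PX"
    and "A \<ge> 0" and "s2 \<ge> 0" and ab: "a + b = 1"
  shows "(\<integral>\<^sup>+ (x, mu, z). ennreal ((a * z + b * g x - mu)\<^sup>2) \<partial>eb_model PX m A s2)
    = ennreal (a\<^sup>2 * s2 + b\<^sup>2 * A) + ennreal (b\<^sup>2) * (\<integral>\<^sup>+ x. ennreal ((g x - m x)\<^sup>2) \<partial>PX)"
proof -
  have inner: "(\<integral>\<^sup>+ mu. \<integral>\<^sup>+ z. ennreal ((a * z + b * g x - mu)\<^sup>2) \<partial>gauss mu s2 \<partial>gauss (m x) A)
      = ennreal (a\<^sup>2 * s2 + b\<^sup>2 * A) + ennreal (b\<^sup>2) * ennreal ((g x - m x)\<^sup>2)" for x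
  proof -
    have "(\<integral>\<^sup>+ z. ennreal ((a * z + b * g x - mu)\<^sup>2) \<partial>gauss mu s2)
        = ennreal (a\<^sup>2 * s2 + (b * mu + - (b * g x))\<^sup>2)" for mu
    proof -
      have a: "a = 1 - b"
        using ab by simp
      have "(a * mu + b * g x - mu)\<^sup>2 = (b * mu + - (b * g x))\<^sup>2"
        unfolding a by (simp add: power2_eq_square algebra_simps)
      then show ?thesis
        using nn_integral_gauss_shifted_square[OF \<open>s2 \<ge> 0\<close> order_refl,
            where p = a and q = "b * g x - mu" and mu = mu]
        by (simp add: add_diff_eq)
    qed
    then have "(\<integral>\<^sup>+ mu. \<integral>\<^sup>+ z. ennreal ((a * z + b * g x - mu)\<^sup>2) \<partial>gauss mu s2 \<partial>gauss (m x) A)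
        = ennreal (a\<^sup>2 * s2 + b\<^sup>2 * A + (b * m x + - (b * g x))\<^sup>2)"
      using nn_integral_gauss_shifted_square[OF \<open>A \<ge> 0\<close>,
          where c = "a\<^sup>2 * s2" and p = b and q = "- (b * g x)" and mu = "m x"] \<open>s2 \<ge> 0\<close>
      by simp
    also have "\<dots> = ennreal (a\<^sup>2 * s2 + b\<^sup>2 * A) + ennreal (b\<^sup>2) * ennreal ((g x - m x)\<^sup>2)"
    proof -
      have "(b * m x + - (b * g x))\<^sup>2 = b\<^sup>2 * (g x - m x)\<^sup>2"
        by (simp add: power2_eq_square algebra_simps)
      then show ?thesis
        using \<open>A \<ge> 0\<close> \<open>s2 \<ge> 0\<close> by (simp add: ennreal_plus ennreal_mult)
    qed
    finally show ?thesis .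
  qed
  have "(\<integral>\<^sup>+ (x, mu, z). ennreal ((a * z + b * g x - mu)\<^sup>2) \<partial>eb_model PX m A s2)
      = (\<integral>\<^sup>+ x. ennreal (a\<^sup>2 * s2 + b\<^sup>2 * A) + ennreal (b\<^sup>2) * ennreal ((g x - m x)\<^sup>2) \<partial>PX)"
    using \<open>A \<ge> 0\<close> \<open>s2 \<ge> 0\<close> by (simp add: nn_integral_eb_model inner)
  also have "\<dots> = ennreal (a\<^sup>2 * s2 + b\<^sup>2 * A) + ennreal (b\<^sup>2) * (\<integral>\<^sup>+ x. ennreal ((g x - m x)\<^sup>2) \<partial>PX)"
    using prob_space.emeasure_space_1[OF \<open>prob_space PX\<close>]
    by (simp add: nn_integral_add nn_integral_cmult)
  finally show ?thesis .
qed

lemma eb_loss_bayes_rule: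
  fixes m g :: "'x \<Rightarrow> real"
  assumes "prob_space PX" and "m \<in> borel_measurable PX" and "g \<in> borel_measurable PX"
    and "A \<ge> 0" and "s2 > 0"
  shows "eb_loss PX (bayes_rule g A s2) m A s2
    = ennreal ((s2 / (s2 + A))\<^sup>2) * (\<integral>\<^sup>+ x. ennreal ((g x - m x)\<^sup>2) \<partial>PX)"
proof -
  have "s2 + A \<noteq> 0"
    using assms(4,5) by linarith
  then have weights: "A / (s2 + A) + s2 / (s2 + A) = 1"
    by (simp add: add_divide_distrib[symmetric] add.commute)
  define K where "K = ennreal ((A / (s2 + A))\<^sup>2 * s2 + (s2 / (s2 + A))\<^sup>2 * A)"
  note risk = eb_model_affine_risk[OF assms(1,2) _ assms(4) less_imp_le[OF assms(5)] weights,
      folded K_def bayes_rule_def]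
  have "K \<noteq> top"
    by (simp add: K_def)
  then show ?thesis
    unfolding eb_loss_def risk[OF assms(3)] risk[OF assms(2)]
    by (simp add: ennreal_add_diff_cancel_left)
qed

lemma sets_data_model: "sets (data_model PX n m A s2) = sets (data_space PX n)"
  unfolding data_model_def data_space_def obs_model_def
  by (rule sets_PiM_cong) auto

lemma eb_minimax_le_plug_in_risk:
  assumes "prob_space PX" and "C \<subseteq> borel_measurable PX" and "A \<ge> 0" and "s2 > 0"
    and mh[measurable]: "(\<lambda>(d, x). mh d x) \<in> borel_measurable (data_space PX n \<Otimes>\<^sub>M PX)"
  shows "eb_minimax PX n C A s2 \<le> ennreal ((s2 / (s2 + A))\<^sup>2) *
    (SUP m \<in> C. \<integral>\<^sup>+ d. (\<integral>\<^sup>+ x. ennreal ((mh d x - m x)\<^sup>2) \<partial>PX) \<partial>data_model PX n m A s2)"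
proof -
  let ?c = "ennreal ((s2 / (s2 + A))\<^sup>2)"
  have "(\<lambda>(d, x, z). bayes_rule (mh d) A s2 x z) \<in> borel_measurable (data_space PX n \<Otimes>\<^sub>M (PX \<Otimes>\<^sub>M borel))"
    unfolding bayes_rule_def by measurable
  then have "eb_minimax PX n C A s2
      \<le> (SUP m \<in> C. \<integral>\<^sup>+ d. eb_loss PX (bayes_rule (mh d) A s2) m A s2 \<partial>data_model PX n m A s2)"
    unfolding eb_minimax_def by (intro INF_lower) simp
  also have "\<dots> = (SUP m \<in> C. ?c * \<integral>\<^sup>+ d. (\<integral>\<^sup>+ x. ennreal ((mh d x - m x)\<^sup>2) \<partial>PX) \<partial>data_model PX n m A s2)"
  proof (intro SUP_cong refl)
    fix m assume "m \<in> C"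
    then have [measurable]: "m \<in> borel_measurable PX"
      using assms(2) by blast
    have mh_d: "mh d \<in> borel_measurable PX" if "d \<in> space (data_space PX n)" for d
      using measurable_Pair2[OF mh that] by simp
    have "(\<lambda>d. \<integral>\<^sup>+ x. ennreal ((mh d x - m x)\<^sup>2) \<partial>PX) \<in> borel_measurable (data_space PX n)"
      by (rule sigma_finite_measure.borel_measurable_nn_integral[OF prob_space_imp_sigma_finite[OF assms(1)]])
        measurable
    then have "(\<lambda>d. \<integral>\<^sup>+ x. ennreal ((mh d x - m x)\<^sup>2) \<partial>PX) \<in> borel_measurable (data_model PX n m A s2)"
      by (simp add: measurable_cong_sets[OF sets_data_model refl])
    moreover have "(\<integral>\<^sup>+ d. eb_loss PX (bayes_rule (mh d) A s2) m A s2 \<partial>data_model PX n m A s2)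
        = (\<integral>\<^sup>+ d. ?c * \<integral>\<^sup>+ x. ennreal ((mh d x - m x)\<^sup>2) \<partial>PX \<partial>data_model PX n m A s2)"
      using assms(1,3,4) mh_d
      by (intro nn_integral_cong) (simp add: eb_loss_bayes_rule sets_eq_imp_space_eq[OF sets_data_model])
    ultimately show "(\<integral>\<^sup>+ d. eb_loss PX (bayes_rule (mh d) A s2) m A s2 \<partial>data_model PX n m A s2)
        = ?c * \<integral>\<^sup>+ d. (\<integral>\<^sup>+ x. ennreal ((mh d x - m x)\<^sup>2) \<partial>PX) \<partial>data_model PX n m A s2"
      by (simp add: nn_integral_cmult)
  qed
  also have "\<dots> = ?c * (SUP m \<in> C. \<integral>\<^sup>+ d. (\<integral>\<^sup>+ x. ennreal ((mh d x - m x)\<^sup>2) \<partial>PX) \<partial>data_model PX n m A s2)"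
    by (rule SUP_mult_left_ennreal[symmetric])
  finally show ?thesis .
qed

lemma le_mult_INF_ennreal:
  fixes c x :: ennreal and f :: "'a \<Rightarrow> ennreal"
  assumes "0 < c" and "c < top" and "\<And>i. i \<in> I \<Longrightarrow> x \<le> c * f i"
  shows "x \<le> c * (INF i \<in> I. f i)"
proof -
  have "x / c \<le> (INF i \<in> I. f i)"
    using assms(1,3) by (intro INF_greatest divide_le_posI_ennreal)
  then have "c * (x / c) \<le> c * (INF i \<in> I. f i)"
    by (rule mult_left_mono) simp
  moreover have "c * (x / c) = x"
    using assms(1,2) by (metis ennreal_mult_divide_eq ennreal_times_divide mult.commute less_irrefl)
  ultimately show ?thesis
    by simp
qed

theorem theorem1:
  fixes PX :: "'x measure" and C :: "('x \<Rightarrow> real) set" and A \<sigma> :: real and n :: nat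
  assumes "prob_space PX"
    and "C \<subseteq> borel_measurable PX"
    and "A \<ge> 0" and "\<sigma> > 0"
  shows "eb_minimax PX n C A (\<sigma>\<^sup>2)
           \<le> ennreal (\<sigma> ^ 4 / (\<sigma>\<^sup>2 + A)\<^sup>2) * reg_minimax PX n C A (\<sigma>\<^sup>2)"
proof -
  have "0 < \<sigma>\<^sup>2 + A"
    using assms(3,4) by (simp add: add_pos_nonneg)
  then have "0 < \<sigma> ^ 4 / (\<sigma>\<^sup>2 + A)\<^sup>2"
    using assms(4) by simp
  moreover have "\<sigma> ^ 4 / (\<sigma>\<^sup>2 + A)\<^sup>2 = (\<sigma>\<^sup>2 / (\<sigma>\<^sup>2 + A))\<^sup>2"
    by (simp add: power_divide)
  ultimately show ?thesis
    unfolding reg_minimax_def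
    using eb_minimax_le_plug_in_risk[OF assms(1-3), of "\<sigma>\<^sup>2"] assms(4)
    by (intro le_mult_INF_ennreal) auto
qed

end
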